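(* Let $X$ be a real reflexive Banach space and let $F \subset X$ be a convex existence set. For $v \in F$ and $t > 0$ put $F_t = (1-t)v + tF$, and let $C_v = \mathrm{cl}\left(\bigcup_{t>0} F_t\right)$. Then $C_v$ is an existence set.
   Context: For a non-empty set $F \subset X$ and $x \in X$, let $R_F(x) = \{ d \in F : \|d-c\| \le \|x-c\| \text{ for all } c \in F\}$. A non-empty set $F \subset X$ is an existence set if $R_F(x) \neq \emptyset$ for every $x \in X$. $\mathrm{cl}$ denotes norm closure. *)

theory Defs
  imports "HOL-Analysis.Analysis"
begin

definition reflexive_space :: "'a::real_normed_vector itself \<Rightarrow> bool" where
  "reflexive_space TYPE('a) \<longleftrightarrow>
     (\<forall>\<Phi> :: ('a \<Rightarrow>\<^sub>L real) \<Rightarrow>\<^sub>L real. \<exists>x::'a. \<forall>f. blinfun_apply \<Phi> f = blinfun_apply f x)"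

definition R_set :: "'a::real_normed_vector set \<Rightarrow> 'a \<Rightarrow> 'a set" where
  "R_set F x = {d \<in> F. \<forall>c\<in>F. norm (d - c) \<le> norm (x - c)}"

definition existence_set :: "'a::real_normed_vector set \<Rightarrow> bool" where
  "existence_set F \<longleftrightarrow> F \<noteq> {} \<and> (\<forall>x. R_set F x \<noteq> {})"

end

theory Submission
  imports Defs
begin

(* Translating by -v reduces the claim to v = 0, where the union of the sets t F is the conic
  hull K of F, a convex cone exhausted by the increasing existence sets (n + 1) F.  Nearest
  points d n of x in (n + 1) F satisfy |d n| <= |x|, so reflexivity and Hahn-Banach give a
  point e with f e <= limsup f (d n) for every bounded functional f.  A norming functional of
  e - c then yields |e - c| <= |x - c| for c in K, hence for c in cl K; a functional that is
  <= 0 on K and equals dist(e, K) at e shows e in cl K.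
  Hahn-Banach for a sublinear p: by Zorn's lemma some sublinear g <= p is minimal, and a
  minimal sublinear functional is linear. *)

definition sublinear :: "('a::real_vector \<Rightarrow> real) \<Rightarrow> bool" where
  "sublinear p \<longleftrightarrow> (\<forall>x y. p (x + y) \<le> p x + p y) \<and> (\<forall>c x. 0 \<le> c \<longrightarrow> p (c *\<^sub>R x) = c * p x)"

lemma sublinear_add: "sublinear p \<Longrightarrow> p (x + y) \<le> p x + p y"
  unfolding sublinear_def by blast

lemma sublinear_scaleR: "sublinear p \<Longrightarrow> 0 \<le> c \<Longrightarrow> p (c *\<^sub>R x) = c * p x"
  unfolding sublinear_def by blast

lemma sublinear_zero: "sublinear p \<Longrightarrow> p 0 = 0"
  using sublinear_scaleR[of p 0 0] by simp

lemma sublinear_neg_le: "sublinear p \<Longrightarrow> - p (- x) \<le> p x"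
  using sublinear_add[of p x "- x"] sublinear_zero[of p] by simp

lemma sublinear_minorant_ge: "sublinear q \<Longrightarrow> q \<le> p \<Longrightarrow> - p (- x) \<le> q x"
  using sublinear_neg_le[of q x] le_funD[of q p "- x"] by linarith

lemma sublinearI:
  assumes zero: "p 0 = 0"
    and scale: "\<And>c x. 0 < c \<Longrightarrow> p (c *\<^sub>R x) \<le> c * p x"
    and add: "\<And>x y. p (x + y) \<le> p x + p y"
  shows "sublinear p"
proof -
  have "p (c *\<^sub>R x) = c * p x" if "0 < c" for c x
  proof -
    have "p x = p (inverse c *\<^sub>R (c *\<^sub>R x))" using that by simp
    also have "\<dots> \<le> inverse c * p (c *\<^sub>R x)" using that by (intro scale) simp
    finally have "c * p x \<le> p (c *\<^sub>R x)" using that by (simp add: field_simps)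
    with scale[OF that, of x] show ?thesis by linarith
  qed
  then have "p (c *\<^sub>R x) = c * p x" if "0 \<le> c" for c x
    using that zero by (cases "c = 0") auto
  with add show ?thesis unfolding sublinear_def by blast
qed

lemma sublinear_INF_chain:
  assumes ne: "C \<noteq> {}"
    and C: "\<And>q. q \<in> C \<Longrightarrow> sublinear q \<and> q \<le> p"
    and chain: "\<And>q1 q2. q1 \<in> C \<Longrightarrow> q2 \<in> C \<Longrightarrow> q1 \<le> q2 \<or> q2 \<le> q1"
  shows "sublinear (\<lambda>x. INF q\<in>C. q x)"
proof -
  let ?u = "\<lambda>x. INF q\<in>C. q x"
  have low: "?u x \<le> q x" if "q \<in> C" for q x
    using that C sublinear_minorant_ge by (intro cINF_lower bdd_belowI2) blast+
  show ?thesis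
  proof (rule sublinearI)
    have "?u 0 = (INF q\<in>C. 0)" using C sublinear_zero by (intro INF_cong) auto
    then show "?u 0 = 0" using ne by simp
  next
    fix c :: real and x assume c: "0 < c"
    have "?u (c *\<^sub>R x) / c \<le> q x" if "q \<in> C" for q
      using low[OF that, of "c *\<^sub>R x"] C[OF that] c
      by (simp add: sublinear_scaleR pos_divide_le_eq mult.commute)
    then have "?u (c *\<^sub>R x) / c \<le> ?u x" by (intro cINF_greatest[OF ne])
    then show "?u (c *\<^sub>R x) \<le> c * ?u x" using c by (simp add: pos_divide_le_eq mult.commute)
  next
    fix x y
    have "?u (x + y) \<le> q1 x + q2 y" if q12: "q1 \<in> C" "q2 \<in> C" for q1 q2
    proof -
      obtain q where q: "q \<in> C" "q \<le> q1" "q \<le> q2"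
        using chain[OF q12] q12 by blast
      have "?u (x + y) \<le> q x + q y"
        using low[OF q(1)] sublinear_add C[OF q(1)] order_trans by blast
      also have "\<dots> \<le> q1 x + q2 y" using q by (simp add: add_mono le_funD)
      finally show ?thesis .
    qed
    then have "?u (x + y) - q2 y \<le> ?u x" if "q2 \<in> C" for q2
      using that by (intro cINF_greatest[OF ne]) (auto simp: algebra_simps)
    then have "?u (x + y) - ?u x \<le> ?u y"
      by (intro cINF_greatest[OF ne]) (auto simp: algebra_simps)
    then show "?u (x + y) \<le> ?u x + ?u y" by simp
  qed
qed

lemma sublinear_ex_minorant_neg:
  fixes a :: "'a::real_vector"
  assumes q: "sublinear q"
  shows "\<exists>q'. sublinear q' \<and> q' \<le> q \<and> q' (- a) \<le> - q a"
proof -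
  define q' where "q' x = (INF t\<in>{0::real..}. q (x + t *\<^sub>R a) - t * q a)" for x
  have ne: "{0::real..} \<noteq> {}" by auto
  have low: "q' x \<le> q (x + t *\<^sub>R a) - t * q a" if "0 \<le> t" for x t
  proof -
    have "- q (- x) \<le> q (x + s *\<^sub>R a) - s * q a" if "0 \<le> s" for s
      using sublinear_add[OF q, of "x + s *\<^sub>R a" "- x"] sublinear_scaleR[OF q that, of a] by simp
    then show ?thesis
      unfolding q'_def using that by (intro cINF_lower bdd_belowI2) auto
  qed
  have "sublinear q'"
  proof (rule sublinearI)
    have "q' 0 = (INF t\<in>{0::real..}. 0)"
      unfolding q'_def using sublinear_scaleR[OF q] by (intro INF_cong) auto
    then show "q' 0 = 0" by simp
  next
    fix c :: real and x assume c: "0 < c"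
    have "q' (c *\<^sub>R x) / c \<le> q (x + t *\<^sub>R a) - t * q a" if "0 \<le> t" for t
    proof -
      have "q' (c *\<^sub>R x) \<le> q (c *\<^sub>R (x + t *\<^sub>R a)) - (c * t) * q a"
        using low[of "c * t" "c *\<^sub>R x"] that c by (simp add: algebra_simps)
      also have "\<dots> = c * (q (x + t *\<^sub>R a) - t * q a)"
        using sublinear_scaleR[OF q, of c "x + t *\<^sub>R a"] c by (simp add: right_diff_distrib)
      finally show ?thesis using c by (simp add: pos_divide_le_eq mult.commute)
    qed
    then have "q' (c *\<^sub>R x) / c \<le> q' x" unfolding q'_def[of x] by (intro cINF_greatest[OF ne]) auto
    then show "q' (c *\<^sub>R x) \<le> c * q' x" using c by (simp add: pos_divide_le_eq mult.commute)
  next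
    fix x y
    have "q' (x + y) \<le> (q (x + s *\<^sub>R a) - s * q a) + (q (y + t *\<^sub>R a) - t * q a)"
      if "0 \<le> s" "0 \<le> t" for s t
    proof -
      have "q' (x + y) \<le> q ((x + s *\<^sub>R a) + (y + t *\<^sub>R a)) - (s + t) * q a"
        using low[of "s + t" "x + y"] that by (simp add: algebra_simps)
      also have "\<dots> \<le> q (x + s *\<^sub>R a) + q (y + t *\<^sub>R a) - (s + t) * q a"
        using sublinear_add[OF q] by simp
      finally show ?thesis by (simp add: algebra_simps)
    qed
    then have "q' (x + y) - (q (y + t *\<^sub>R a) - t * q a) \<le> q' x" if "0 \<le> t" for t
      using that unfolding q'_def[of x] by (intro cINF_greatest[OF ne]) (auto simp: algebra_simps)
    then have "q' (x + y) - q' x \<le> q' y"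
      unfolding q'_def[of y] by (intro cINF_greatest[OF ne]) (auto simp: algebra_simps)
    then show "q' (x + y) \<le> q' x + q' y" by simp
  qed
  moreover have "q' \<le> q" using low[of 0] by (simp add: le_fun_def)
  moreover have "q' (- a) \<le> - q a" using low[of 1 "- a"] sublinear_zero[OF q] by simp
  ultimately show ?thesis by blast
qed

lemma minimal_sublinear_imp_linear:
  assumes g: "sublinear g" and minimal: "\<And>q. sublinear q \<Longrightarrow> q \<le> g \<Longrightarrow> q = g"
  shows "linear g"
proof -
  have neg: "g (- a) = - g a" for a
  proof -
    obtain q where "sublinear q" "q \<le> g" "q (- a) \<le> - g a"
      using sublinear_ex_minorant_neg[OF g] by blast
    then have "g (- a) \<le> - g a" using minimal by blast
    with sublinear_neg_le[OF g, of a] show ?thesis by linarith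
  qed
  show ?thesis
  proof (rule linearI)
    fix x y
    show "g (x + y) = g x + g y"
      using sublinear_add[OF g, of x y] sublinear_add[OF g, of "- x" "- y"] neg[of "x + y"] neg[of x] neg[of y]
      by simp
  next
    fix c :: real and x
    show "g (c *\<^sub>R x) = c *\<^sub>R g x"
    proof (cases "0 \<le> c")
      case True then show ?thesis using sublinear_scaleR[OF g] by simp
    next
      case False
      then have "g (c *\<^sub>R x) = - g ((- c) *\<^sub>R x)" using neg[of "(- c) *\<^sub>R x"] by simp
      also have "\<dots> = c * g x" using sublinear_scaleR[OF g, of "- c" x] False by simp
      finally show ?thesis by simp
    qed
  qed
qed

lemma sublinear_ex_minimal_minorant:
  assumes p: "sublinear p"
  shows "\<exists>g. sublinear g \<and> g \<le> p \<and> (\<forall>q. sublinear q \<longrightarrow> q \<le> g \<longrightarrow> q = g)"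
proof -
  define A where "A = {q. sublinear q \<and> q \<le> p}"
  have "partial_order_on A (relation_of (\<ge>) A)"
    by (rule partial_order_on_relation_ofI) auto
  moreover have "\<exists>u\<in>A. \<forall>q\<in>C. u \<le> q" if "C \<in> Chains (relation_of (\<ge>) A)" for C
  proof (cases "C = {}")
    case True then show ?thesis using p unfolding A_def by auto
  next
    case False
    have C: "q \<in> C \<Longrightarrow> sublinear q \<and> q \<le> p" for q
      using Chains_relation_of[OF that] unfolding A_def by blast
    have chain: "q1 \<le> q2 \<or> q2 \<le> q1" if "q1 \<in> C" "q2 \<in> C" for q1 q2
      using \<open>C \<in> Chains _\<close> that unfolding Chains_def relation_of_def by blast
    let ?u = "\<lambda>x. INF q\<in>C. q x"
    have low: "?u \<le> q" if "q \<in> C" for q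
    proof (rule le_funI)
      fix x
      have "bdd_below ((\<lambda>q. q x) ` C)"
        using C sublinear_minorant_ge by (intro bdd_belowI2) blast
      then show "?u x \<le> q x" using that by (rule cINF_lower)
    qed
    obtain q0 where "q0 \<in> C" using False by blast
    then have "?u \<le> p" using low C order_trans by metis
    then have "?u \<in> A" unfolding A_def using sublinear_INF_chain[OF False C chain] by blast
    with low show ?thesis by blast
  qed
  ultimately obtain g where "g \<in> A" "\<And>q. q \<in> A \<Longrightarrow> q \<le> g \<Longrightarrow> q = g"
    using predicate_Zorn[of A "(\<ge>)"] by blast
  then show ?thesis unfolding A_def using order_trans by (metis (mono_tags) mem_Collect_eq)
qed

theorem hahn_banach_sublinear:
  assumes p: "sublinear p"
  shows "\<exists>g. linear g \<and> g \<le> p \<and> g z = p z"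
proof -
  obtain p' where p': "sublinear p'" "p' \<le> p" "p' (- z) \<le> - p z"
    using sublinear_ex_minorant_neg[OF p] by blast
  then obtain g where g: "sublinear g" "g \<le> p'" "\<And>q. sublinear q \<Longrightarrow> q \<le> g \<Longrightarrow> q = g"
    using sublinear_ex_minimal_minorant by blast
  have lin: "linear g" using g by (intro minimal_sublinear_imp_linear) auto
  have "g \<le> p" using g(2) p'(2) by (rule order_trans)
  moreover have "p z \<le> g z"
    using linear_neg[OF lin, of z] le_funD[OF g(2), of "- z"] p'(3) by linarith
  moreover have "g z \<le> p z" using \<open>g \<le> p\<close> by (rule le_funD)
  ultimately show ?thesis using lin by (intro exI[of _ g]) auto
qed

corollary hahn_banach_blinfun:
  fixes p :: "'a::real_normed_vector \<Rightarrow> real"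
  assumes p: "sublinear p" and bound: "\<And>x. p x \<le> C * norm x"
  shows "\<exists>f::'a \<Rightarrow>\<^sub>L real. (\<forall>x. f x \<le> p x) \<and> f z = p z"
proof -
  obtain g where g: "linear g" "g \<le> p" "g z = p z"
    using hahn_banach_sublinear[OF p] by blast
  have le: "g x \<le> C * norm x" for x using le_funD[OF g(2), of x] bound[of x] by linarith
  have "norm (g x) \<le> norm x * C" for x
    using le[of x] le[of "- x"] linear_neg[OF g(1), of x] by (simp add: abs_le_iff mult.commute)
  then have "bounded_linear g"
    using g(1) by (intro bounded_linear_intro[where K = C]) (auto simp: linear_add linear_scale)
  then show ?thesis
    using g by (intro exI[of _ "Blinfun g"]) (simp add: bounded_linear_Blinfun_apply le_fun_def)
qed

lemma sublinear_norm: "sublinear norm"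
  unfolding sublinear_def by (simp add: norm_triangle_ineq)

lemma sublinear_infdist_convex_cone:
  fixes K :: "'a::real_normed_vector set"
  assumes K: "convex_cone K"
  shows "sublinear (\<lambda>x. infdist x K)"
proof (rule sublinearI)
  show "infdist 0 K = 0" using convex_cone_contains_0[OF K] by simp
next
  fix c :: real and x assume c: "0 < c"
  have "infdist (c *\<^sub>R x) K / c \<le> dist x k" if "k \<in> K" for k
  proof -
    have "infdist (c *\<^sub>R x) K \<le> dist (c *\<^sub>R x) (c *\<^sub>R k)"
      using convex_cone_scaleR[OF K _ that, of c] c by (intro infdist_le) simp
    also have "\<dots> = c * dist x k" using c by (simp add: dist_norm flip: scaleR_diff_right)
    finally show ?thesis using c by (simp add: pos_divide_le_eq mult.commute)
  qed
  then have "infdist (c *\<^sub>R x) K / c \<le> infdist x K"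
    using convex_cone_nonempty[OF K] by (simp add: infdist_notempty cINF_greatest)
  then show "infdist (c *\<^sub>R x) K \<le> c * infdist x K" using c by (simp add: pos_divide_le_eq mult.commute)
next
  fix x y
  have "infdist (x + y) K - dist y l \<le> dist x k" if "k \<in> K" "l \<in> K" for k l
  proof -
    have "infdist (x + y) K \<le> dist (x + y) (k + l)"
      using convex_cone_add[OF K that] by (rule infdist_le)
    also have "\<dots> \<le> dist x k + dist y l"
      by (simp add: dist_norm) (metis add_diff_add norm_triangle_ineq)
    finally show ?thesis by simp
  qed
  then have "infdist (x + y) K - dist y l \<le> infdist x K" if "l \<in> K" for l
    using that convex_cone_nonempty[OF K] by (simp add: infdist_notempty cINF_greatest)
  then have "infdist (x + y) K - infdist x K \<le> dist y l" if "l \<in> K" for l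
    using that by fastforce
  then have "infdist (x + y) K - infdist x K \<le> infdist y K"
    using convex_cone_nonempty[OF K] by (simp add: infdist_notempty cINF_greatest)
  then show "infdist (x + y) K \<le> infdist x K + infdist y K" by simp
qed

lemma convex_cone_separating_functional:
  fixes K :: "'a::real_normed_vector set"
  assumes K: "convex_cone K"
  shows "\<exists>f::'a \<Rightarrow>\<^sub>L real. (\<forall>k\<in>K. f k \<le> 0) \<and> f z = infdist z K"
proof -
  have "infdist x K \<le> 1 * norm x" for x
    using infdist_le[OF convex_cone_contains_0[OF K], of x] by simp
  then obtain f :: "'a \<Rightarrow>\<^sub>L real" where "\<forall>x. f x \<le> infdist x K" "f z = infdist z K"
    using hahn_banach_blinfun[OF sublinear_infdist_convex_cone[OF K]] by blast
  then show ?thesis by (metis infdist_zero)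
qed

text \<open>The condition says f e \<le> limsup f (d n) for every bounded functional f.  Weak cluster
  points of d satisfy it, and it is all of weak compactness that the argument needs.\<close>
definition weak_limsup_point :: "(nat \<Rightarrow> 'a::real_normed_vector) \<Rightarrow> 'a \<Rightarrow> bool" where
  "weak_limsup_point d e \<longleftrightarrow>
     (\<forall>(f::'a \<Rightarrow>\<^sub>L real) B. (\<forall>\<^sub>F n in sequentially. f (d n) \<le> B) \<longrightarrow> f e \<le> B)"

lemma weak_limsup_pointD:
  fixes f :: "'a::real_normed_vector \<Rightarrow>\<^sub>L real"
  shows "weak_limsup_point d e \<Longrightarrow> \<forall>\<^sub>F n in sequentially. f (d n) \<le> B \<Longrightarrow> f e \<le> B"
  unfolding weak_limsup_point_def by blast

lemma reflexive_space_ex_weak_limsup_point: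
  fixes d :: "nat \<Rightarrow> 'a::real_normed_vector"
  assumes refl: "reflexive_space TYPE('a)" and bounded: "\<And>n. norm (d n) \<le> R"
  shows "\<exists>e. weak_limsup_point d e"
proof -
  define S where "S f = {B. \<forall>\<^sub>F n in sequentially. f (d n) \<le> B}" for f :: "'a \<Rightarrow>\<^sub>L real"
  define p where "p f = Inf (S f)" for f
  have f_bound: "\<bar>f (d n)\<bar> \<le> norm f * R" for f :: "'a \<Rightarrow>\<^sub>L real" and n
    using norm_blinfun[of f "d n"] mult_left_mono[OF bounded[of n] norm_ge_zero, of f]
    by (metis order_trans real_norm_def)
  have norm_in_S: "norm f * R \<in> S f" for f
    unfolding S_def using f_bound abs_le_D1 by (blast intro: always_eventually)
  have bdd: "bdd_below (S f)" for f
  proof (rule bdd_belowI)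
    fix B assume "B \<in> S f"
    then obtain N where "\<And>n. n \<ge> N \<Longrightarrow> f (d n) \<le> B"
      unfolding S_def eventually_sequentially by auto
    then show "- (norm f * R) \<le> B" using f_bound[of f N] by fastforce
  qed
  have p_le: "p f \<le> B" if "B \<in> S f" for f B
    unfolding p_def using that bdd by (rule cInf_lower)
  have p_ge: "B \<le> p f" if "\<And>B'. B' \<in> S f \<Longrightarrow> B \<le> B'" for f B
    unfolding p_def using norm_in_S that by (intro cInf_greatest) blast+
  have "sublinear p"
  proof (rule sublinearI)
    have "S 0 = {0..}" unfolding S_def by auto
    then show "p 0 = 0" unfolding p_def by simp
  next
    fix c :: real and f assume c: "0 < c"
    have "p (c *\<^sub>R f) / c \<le> B" if "B \<in> S f" for B
    proof -
      have "c * B \<in> S (c *\<^sub>R f)" using that c unfolding S_def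
        by (auto elim!: eventually_mono simp: blinfun.scaleR_left)
      then show ?thesis using c p_le by (simp add: pos_divide_le_eq mult.commute)
    qed
    then have "p (c *\<^sub>R f) / c \<le> p f" by (rule p_ge)
    then show "p (c *\<^sub>R f) \<le> c * p f" using c by (simp add: pos_divide_le_eq mult.commute)
  next
    fix f g :: "'a \<Rightarrow>\<^sub>L real"
    have "p (f + g) - B2 \<le> B1" if "B1 \<in> S f" "B2 \<in> S g" for B1 B2
    proof -
      have "B1 + B2 \<in> S (f + g)" using that unfolding S_def
        by (auto elim: eventually_elim2 simp: blinfun.add_left)
      then show ?thesis using p_le by fastforce
    qed
    then have "p (f + g) - B2 \<le> p f" if "B2 \<in> S g" for B2 using that by (intro p_ge) auto
    then have "p (f + g) - p f \<le> p g" by (intro p_ge) (auto simp: algebra_simps)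
    then show "p (f + g) \<le> p f + p g" by simp
  qed
  moreover have "p f \<le> R * norm f" for f using p_le[OF norm_in_S] by (simp add: mult.commute)
  ultimately obtain \<Phi> :: "('a \<Rightarrow>\<^sub>L real) \<Rightarrow>\<^sub>L real" where \<Phi>: "\<forall>f. \<Phi> f \<le> p f"
    using hahn_banach_blinfun by blast
  obtain e where e: "\<And>f. \<Phi> f = f e"
    using refl unfolding reflexive_space_def by blast
  have "f e \<le> B" if "\<forall>\<^sub>F n in sequentially. f (d n) \<le> B" for f :: "'a \<Rightarrow>\<^sub>L real" and B
    using \<Phi> p_le[of B f] that unfolding S_def e by (metis mem_Collect_eq order_trans)
  then show ?thesis unfolding weak_limsup_point_def by blast
qed

lemma weak_limsup_point_norm_le:
  assumes e: "weak_limsup_point d e" and ev: "\<forall>\<^sub>F n in sequentially. norm (d n - c) \<le> r"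
  shows "norm (e - c) \<le> r"
proof -
  obtain f :: "'a \<Rightarrow>\<^sub>L real" where f: "\<forall>x. f x \<le> norm x" "f (e - c) = norm (e - c)"
    using hahn_banach_blinfun[OF sublinear_norm, of 1] by auto
  have "\<forall>\<^sub>F n in sequentially. f (d n) \<le> f c + r"
  proof (rule eventually_mono[OF ev])
    fix n assume "norm (d n - c) \<le> r"
    moreover have "f (d n) - f c \<le> norm (d n - c)" using f(1) by (simp flip: blinfun.diff_right)
    ultimately show "f (d n) \<le> f c + r" by simp
  qed
  then have "f e \<le> f c + r" by (rule weak_limsup_pointD[OF e])
  then show ?thesis using f(2) by (simp add: blinfun.diff_right)
qed

lemma weak_limsup_point_in_closure_convex_cone:
  assumes e: "weak_limsup_point d e" and K: "convex_cone K" and d: "\<And>n. d n \<in> K"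
  shows "e \<in> closure K"
proof -
  obtain f :: "'a \<Rightarrow>\<^sub>L real" where f: "\<forall>k\<in>K. f k \<le> 0" "f e = infdist e K"
    using convex_cone_separating_functional[OF K] by blast
  have "f e \<le> 0" using d f(1) by (intro weak_limsup_pointD[OF e] always_eventually) blast
  then have "infdist e K = 0" using f(2) infdist_nonneg[of e K] by linarith
  then show ?thesis using in_closure_iff_infdist_zero[OF convex_cone_nonempty[OF K]] by blast
qed

lemma existence_set_homothety:
  fixes F :: "'a::real_normed_vector set"
  assumes F: "existence_set F" and t: "0 < t"
  shows "existence_set ((\<lambda>y. a + t *\<^sub>R y) ` F)"
proof -
  let ?h = "\<lambda>y. a + t *\<^sub>R y"
  have dist_h: "norm (?h y - ?h z) = t * norm (y - z)" for y z
    using t by (simp flip: scaleR_diff_right)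
  have "R_set (?h ` F) x \<noteq> {}" for x
  proof -
    define y where "y = inverse t *\<^sub>R (x - a)"
    have x: "?h y = x" using t by (simp add: y_def)
    obtain d where d: "d \<in> F" "\<And>c. c \<in> F \<Longrightarrow> norm (d - c) \<le> norm (y - c)"
      using F unfolding existence_set_def R_set_def by blast
    have "norm (?h d - ?h c) \<le> norm (x - ?h c)" if "c \<in> F" for c
      using d(2)[OF that] t dist_h[of d c] dist_h[of y c] unfolding x by simp
    then have "?h d \<in> R_set (?h ` F) x" unfolding R_set_def using d(1) by blast
    then show ?thesis by blast
  qed
  then show ?thesis using F unfolding existence_set_def by blast
qed

lemma convex_scaleR_image_mono:
  fixes F :: "'a::real_vector set"
  assumes F: "convex F" "0 \<in> F" and st: "0 \<le> s" "s \<le> t"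
  shows "(*\<^sub>R) s ` F \<subseteq> (*\<^sub>R) t ` F"
proof (cases "t = 0")
  case True then show ?thesis using st by simp
next
  case False
  then have t: "0 < t" using st by simp
  show ?thesis
  proof
    fix x assume "x \<in> (*\<^sub>R) s ` F"
    then obtain y where y: "y \<in> F" "x = s *\<^sub>R y" by blast
    have "(s / t) *\<^sub>R y \<in> F"
      using convexD[OF F(1) y(1) F(2), of "s / t" "1 - s / t"] st t by simp
    moreover have "x = t *\<^sub>R ((s / t) *\<^sub>R y)" using y(2) t by simp
    ultimately show "x \<in> (*\<^sub>R) t ` F" by blast
  qed
qed

lemma conic_hull_eventually_in_scaleR_image:
  fixes F :: "'a::real_vector set"
  assumes F: "convex F" "0 \<in> F" and c: "c \<in> conic hull F"
  shows "\<forall>\<^sub>F n in sequentially. c \<in> (*\<^sub>R) (real n + 1) ` F"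
proof -
  obtain s y where c: "c = s *\<^sub>R y" "0 \<le> s" "y \<in> F"
    using c unfolding conic_hull_explicit by blast
  have "\<forall>\<^sub>F n in sequentially. s \<le> real n"
    using filterlim_real_sequentially by (simp add: filterlim_at_top)
  then show ?thesis
  proof eventually_elim
    case (elim n)
    then show ?case using convex_scaleR_image_mono[OF F c(2), of "real n + 1"] c by force
  qed
qed

lemma R_set_closureI:
  fixes S :: "'a::real_normed_vector set"
  assumes e: "e \<in> closure S" and le: "\<And>c. c \<in> S \<Longrightarrow> norm (e - c) \<le> norm (x - c)"
  shows "e \<in> R_set (closure S) x"
proof -
  have "closed {c. norm (e - c) \<le> norm (x - c)}"
    by (intro closed_Collect_le continuous_intros)
  then have "closure S \<subseteq> {c. norm (e - c) \<le> norm (x - c)}"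
    using le by (intro closure_minimal) auto
  then show ?thesis unfolding R_set_def using e by blast
qed

theorem existence_set_closure_conic_hull:
  fixes F :: "'a::real_normed_vector set"
  assumes refl: "reflexive_space TYPE('a)"
    and F: "convex F" "existence_set F" "0 \<in> F"
  shows "existence_set (closure (conic hull F))"
proof -
  let ?K = "conic hull F"
  let ?F = "\<lambda>n::nat. (*\<^sub>R) (real n + 1) ` F"
  have K: "convex_cone ?K"
    unfolding convex_cone_def using F by (auto simp: convex_conic_hull conic_conic_hull conic_hull_eq_empty)
  have "R_set (closure ?K) x \<noteq> {}" for x
  proof -
    have "existence_set (?F n)" for n
      using existence_set_homothety[OF F(2), of "real n + 1" 0] by simp
    then have "\<forall>n. \<exists>e. e \<in> R_set (?F n) x" unfolding existence_set_def by blast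
    then obtain d where d: "\<And>n. d n \<in> R_set (?F n) x" by metis
    have zero_in: "0 \<in> ?F n" for n using F(3) by (auto intro: image_eqI[of _ _ 0])
    have "norm (d n) \<le> norm x" for n using d[of n] zero_in[of n] unfolding R_set_def by force
    then obtain e where e: "weak_limsup_point d e"
      using reflexive_space_ex_weak_limsup_point[OF refl] by blast
    have "d n \<in> ?K" for n
      using d[of n] unfolding R_set_def conic_hull_explicit by (fastforce simp: add_nonneg_nonneg)
    then have e_in: "e \<in> closure ?K"
      using weak_limsup_point_in_closure_convex_cone[OF e K] by blast
    have "norm (e - c) \<le> norm (x - c)" if "c \<in> ?K" for c
    proof -
      have "\<forall>\<^sub>F n in sequentially. norm (d n - c) \<le> norm (x - c)"
        using conic_hull_eventually_in_scaleR_image[OF F(1,3) that]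
        by eventually_elim (use d in \<open>auto simp: R_set_def\<close>)
      then show ?thesis by (rule weak_limsup_point_norm_le[OF e])
    qed
    then show ?thesis using R_set_closureI[OF e_in] by blast
  qed
  moreover have "0 \<in> closure ?K"
    using F(3) closure_subset[of ?K] conic_hull_contains_0[of F] by blast
  ultimately show ?thesis unfolding existence_set_def by auto
qed

lemma UN_homothety_image_eq_conic_hull:
  fixes F :: "'a::real_vector set"
  assumes v: "v \<in> F"
  shows "(\<Union>t\<in>{0<..}. (\<lambda>y. (1 - t) *\<^sub>R v + t *\<^sub>R y) ` F) = (+) v ` (conic hull ((\<lambda>y. y - v) ` F))"
    (is "?U = ?V")
proof
  have "(1 - t) *\<^sub>R v + t *\<^sub>R y = v + t *\<^sub>R (y - v)" for t y
    by (simp add: algebra_simps)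
  then show "?U \<subseteq> ?V"
    unfolding conic_hull_explicit by (force intro: less_imp_le)
next
  show "?V \<subseteq> ?U"
  proof
    fix x assume "x \<in> ?V"
    then obtain c y where x: "x = v + c *\<^sub>R (y - v)" and c: "0 \<le> c" and y: "y \<in> F"
      unfolding conic_hull_explicit by blast
    show "x \<in> ?U"
    proof (cases "c = 0")
      case True
      then have "x = (1 - 1) *\<^sub>R v + 1 *\<^sub>R v" using x by simp
      then show ?thesis using v by (intro UN_I[of 1]) auto
    next
      case False
      then have "x = (1 - c) *\<^sub>R v + c *\<^sub>R y" using x by (simp add: algebra_simps)
      then show ?thesis using False c y by (intro UN_I[of c]) auto
    qed
  qed
qed

theorem corollary14:
  fixes F :: "'a::banach set" and v :: 'a
  assumes "reflexive_space TYPE('a)"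
    and "convex F"
    and "existence_set F"
    and "v \<in> F"
  shows "existence_set
           (closure (\<Union>t\<in>{0<..}. (\<lambda>y. (1 - t) *\<^sub>R v + t *\<^sub>R y) ` F))"
proof -
  let ?G = "(\<lambda>y. y - v) ` F"
  have "convex ?G" using assms(2) by (rule convex_translation_subtract)
  moreover have "existence_set ?G"
    using existence_set_homothety[OF assms(3), of 1 "- v"] by simp
  moreover have "0 \<in> ?G" using assms(4) by simp
  ultimately have "existence_set (closure (conic hull ?G))"
    using existence_set_closure_conic_hull[OF assms(1)] by blast
  then have "existence_set ((+) v ` closure (conic hull ?G))"
    using existence_set_homothety[of _ 1 v] by simp
  then show ?thesis
    by (simp add: UN_homothety_image_eq_conic_hull[OF assms(4)] closure_translation)
qed

end
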